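(* Let $\mathbb{F}_Q$ be a prime field, $\mathbb{F}_Q^*=\mathbb{F}_Q\setminus\{0\}$, $\sigma\in\mathbb{N}$, and $H:\{0,1\}^\sigma\to\mathbb{F}_Q$ a function with no collisions on the inputs considered. An OLE tuple $(r_A,r_B,s_A,s_B)$ is generated by drawing $s_A,s_B$ uniformly from $\mathbb{F}_Q$ and $r_B$ uniformly from $\mathbb{F}_Q^*$, independently, and setting $r_A=(s_A+s_B)/r_B$ (so $r_Ar_B=s_A+s_B$); Alice receives $(r_A,s_A)$ and Bob receives $(r_B,s_B)$. Alice has input $x\in\{0,1\}^\sigma$ and Bob has input $y\in\{0,1\}^\sigma$. In the comparison protocol, Alice sends $c=s_A-H(x)$ to Bob, Bob sends $d=(c+H(y)+s_B)/r_B$ to Alice, and Alice outputs "match" iff $d=r_A$ (her output is whether $x=y$; Bob has no output). Then the protocol is secure in the semi-honest model: there exist simulators $\mathsf{Sim}_A$ (given $x$, Alice's OLE share and the output) and $\mathsf{Sim}_B$ (given $y$ and Bob's OLE share) whose outputs are identically distributed to Alice's and Bob's respective views in the protocol.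
   Context: Semi-honest security: a party's view consists of its input, its random coins/correlated randomness and all messages it receives; a protocol is secure if each party's view can be simulated from that party's input and output alone (here, perfectly, i.e. with identical distribution). All arithmetic is in $\mathbb{F}_Q$. *)

theory Defs
  imports "HOL-Probability.Probability" "HOL-Computational_Algebra.Primes"
begin

text \<open>The field F_Q is modelled as a finite field type 'a whose cardinality Q is prime
  (i.e. a prime field, up to isomorphism). Bit strings of length sigma are bool lists.\<close>

definition ole :: "('a::{finite,field} \<times> 'a \<times> 'a \<times> 'a) pmf" where
  "ole = do {
     sA \<leftarrow> pmf_of_set (UNIV :: 'a set);
     sB \<leftarrow> pmf_of_set (UNIV :: 'a set);
     rB \<leftarrow> pmf_of_set (UNIV - {0 :: 'a});
     return_pmf ((sA + sB) / rB, rB, sA, sB) }"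

definition msg_c :: "(bool list \<Rightarrow> 'a::field) \<Rightarrow> bool list \<Rightarrow> 'a \<Rightarrow> 'a" where
  "msg_c H x sA = sA - H x"

definition msg_d :: "(bool list \<Rightarrow> 'a::field) \<Rightarrow> bool list \<Rightarrow> 'a \<Rightarrow> 'a \<Rightarrow> 'a \<Rightarrow> 'a" where
  "msg_d H y c rB sB = (c + H y + sB) / rB"

definition view_A :: "(bool list \<Rightarrow> 'a::{finite,field}) \<Rightarrow> bool list \<Rightarrow> bool list
    \<Rightarrow> (bool list \<times> ('a \<times> 'a) \<times> 'a) pmf" where
  "view_A H x y = map_pmf (\<lambda>(rA, rB, sA, sB).
      (x, (rA, sA), msg_d H y (msg_c H x sA) rB sB)) ole"

definition view_B :: "(bool list \<Rightarrow> 'a::{finite,field}) \<Rightarrow> bool list \<Rightarrow> bool list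
    \<Rightarrow> (bool list \<times> ('a \<times> 'a) \<times> 'a) pmf" where
  "view_B H x y = map_pmf (\<lambda>(rA, rB, sA, sB).
      (y, (rB, sB), msg_c H x sA)) ole"

definition out_A :: "bool list \<times> ('a \<times> 'a) \<times> 'a \<Rightarrow> bool" where
  "out_A v = (case v of (x, (rA, sA), d) \<Rightarrow> d = rA)"

end

theory Submission
  imports Defs
begin

text \<open>Given s_A and r_B \<noteq> 0, the map s_B \<mapsto> (s_A + s_B) / r_B is a bijection of the field,
  so r_A is uniform and independent of (s_A, r_B); then s_B = r_A r_B - s_A. In Alice's
  view the message becomes d = r_A + (H y - H x) / r_B: for x = y it equals r_A, and for
  x \<noteq> y the offset (H y - H x) / r_B is uniform on the nonzero elements because H is
  injective. In Bob's view c = s_A - H x is a uniform one-time pad.\<close>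

lemma bind_pmf_of_set_bij_betw:
  assumes "bij_betw f A A" "A \<noteq> {}" "finite A"
  shows "pmf_of_set A \<bind> (\<lambda>a. g (f a)) = pmf_of_set A \<bind> g"
  by (simp flip: bind_map_pmf add: map_pmf_of_set_bij_betw[OF assms])

lemma nonzero_nonempty: "UNIV - {0 :: 'a :: zero_neq_one} \<noteq> {}"
proof -
  have "(1 :: 'a) \<in> UNIV - {0}"
    by simp
  then show ?thesis
    by blast
qed

lemma set_pmf_of_set_nonzero [simp]:
  "set_pmf (pmf_of_set (UNIV - {0 :: 'a :: {finite,zero_neq_one}})) = UNIV - {0}"
  by (rule set_pmf_of_set[OF nonzero_nonempty]) simp

definition sim_A :: "bool list \<Rightarrow> bool \<Rightarrow> (bool list \<times> ('a::{finite,field} \<times> 'a) \<times> 'a) pmf"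
  where "sim_A x match = do {
     sA \<leftarrow> pmf_of_set UNIV;
     e \<leftarrow> pmf_of_set (UNIV - {0});
     rA \<leftarrow> pmf_of_set UNIV;
     return_pmf (x, (rA, sA), if match then rA else rA + e) }"

definition sim_B :: "bool list \<Rightarrow> (bool list \<times> ('a::{finite,field} \<times> 'a) \<times> 'a) pmf"
  where "sim_B y = do {
     c \<leftarrow> pmf_of_set UNIV;
     sB \<leftarrow> pmf_of_set UNIV;
     rB \<leftarrow> pmf_of_set (UNIV - {0});
     return_pmf (y, (rB, sB), c) }"

lemma ole_alt_def:
  "ole = do {
     sA \<leftarrow> pmf_of_set UNIV;
     rB \<leftarrow> pmf_of_set (UNIV - {0});
     rA \<leftarrow> pmf_of_set UNIV;
     return_pmf (rA, rB, sA, rA * rB - sA) }"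
proof -
  let ?U = "pmf_of_set (UNIV :: 'a set)"
  let ?N = "pmf_of_set (UNIV - {0 :: 'a})"
  have "ole = ?U \<bind> (\<lambda>sA. ?N \<bind> (\<lambda>rB. ?U \<bind> (\<lambda>sB.
      return_pmf ((sA + sB) / rB, rB, sA, sB))))"
    unfolding ole_def by (intro bind_pmf_cong refl bind_commute_pmf)
  also have "\<dots> = ?U \<bind> (\<lambda>sA. ?N \<bind> (\<lambda>rB. ?U \<bind> (\<lambda>rA.
      return_pmf (rA, rB, sA, rA * rB - sA))))"
  proof (rule bind_pmf_cong[OF refl], rule bind_pmf_cong[OF refl])
    fix sA rB :: 'a
    assume "rB \<in> set_pmf ?N"
    then have "rB \<noteq> 0"
      by simp
    then have "bij_betw (\<lambda>sB. (sA + sB) / rB) UNIV UNIV"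
      by (intro bij_betwI[where g = "\<lambda>rA. rA * rB - sA"]) auto
    from bind_pmf_of_set_bij_betw[OF this, of "\<lambda>rA. return_pmf (rA, rB, sA, rA * rB - sA)"]
    show "?U \<bind> (\<lambda>sB. return_pmf ((sA + sB) / rB, rB, sA, sB))
        = ?U \<bind> (\<lambda>rA. return_pmf (rA, rB, sA, rA * rB - sA))"
      using \<open>rB \<noteq> 0\<close> by simp
  qed
  finally show ?thesis .
qed

lemma view_A_alt_def:
  "view_A H x y = do {
     sA \<leftarrow> pmf_of_set UNIV;
     rB \<leftarrow> pmf_of_set (UNIV - {0});
     rA \<leftarrow> pmf_of_set UNIV;
     return_pmf (x, (rA, sA), rA + (H y - H x) / rB) }"
  unfolding view_A_def ole_alt_def msg_c_def msg_d_def map_bind_pmf map_return_pmf prod.case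
proof (rule bind_pmf_cong[OF refl], rule bind_pmf_cong[OF refl])
  fix sA rB :: 'a
  assume "rB \<in> set_pmf (pmf_of_set (UNIV - {0}))"
  then have "rB \<noteq> 0"
    by simp
  then have "(sA - H x + H y + (rA * rB - sA)) / rB = rA + (H y - H x) / rB" for rA
    by (simp add: field_simps)
  then show "pmf_of_set UNIV \<bind> (\<lambda>rA. return_pmf (x, (rA, sA), (sA - H x + H y + (rA * rB - sA)) / rB))
      = pmf_of_set UNIV \<bind> (\<lambda>rA. return_pmf (x, (rA, sA), rA + (H y - H x) / rB))"
    by simp
qed

lemma view_A_eq_sim_A:
  assumes "H x = H y \<longleftrightarrow> x = y"
  shows "view_A H x y = sim_A x (x = y)"
proof (cases "x = y")
  case True
  then show ?thesis
    unfolding view_A_alt_def sim_A_def by simp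
next
  case False
  define \<delta> where "\<delta> = H y - H x"
  have "\<delta> \<noteq> 0"
    using assms False unfolding \<delta>_def by simp
  then have "bij_betw (\<lambda>rB. \<delta> / rB) (UNIV - {0}) (UNIV - {0})"
    by (intro bij_betwI[where g = "\<lambda>e. \<delta> / e"]) auto
  note shift = bind_pmf_of_set_bij_betw[OF this nonzero_nonempty]
  show ?thesis
    unfolding view_A_alt_def sim_A_def \<delta>_def[symmetric] using False
    by (simp add: shift[of "\<lambda>e. pmf_of_set UNIV \<bind> (\<lambda>rA. return_pmf (x, (rA, _), rA + e))"])
qed

lemma view_B_eq_sim_B: "view_B H x y = sim_B y"
proof -
  have "bij_betw (\<lambda>sA. sA - H x) UNIV UNIV"
    by (intro bij_betwI[where g = "\<lambda>c. c + H x"]) auto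
  from bind_pmf_of_set_bij_betw[OF this,
      of "\<lambda>c. pmf_of_set UNIV \<bind> (\<lambda>sB. pmf_of_set (UNIV - {0}) \<bind>
              (\<lambda>rB. return_pmf (y, (rB, sB), c)))"]
  show ?thesis
    unfolding view_B_def ole_def sim_B_def msg_c_def map_bind_pmf by simp
qed

theorem theorem2:
  fixes H :: "bool list \<Rightarrow> 'a::{finite,field}" and \<sigma> :: nat
  assumes "prime CARD('a)"
    and "inj_on H {xs. length xs = \<sigma>}"
  shows "(\<exists>SimA :: bool list \<Rightarrow> bool \<Rightarrow> (bool list \<times> ('a \<times> 'a) \<times> 'a) pmf.
            \<forall>x y. length x = \<sigma> \<longrightarrow> length y = \<sigma> \<longrightarrow>
              view_A H x y = SimA x (x = y))
       \<and> (\<exists>SimB :: bool list \<Rightarrow> (bool list \<times> ('a \<times> 'a) \<times> 'a) pmf.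
            \<forall>x y. length x = \<sigma> \<longrightarrow> length y = \<sigma> \<longrightarrow>
              view_B H x y = SimB y)"
proof (intro conjI exI allI impI)
  fix x y :: "bool list"
  assume "length x = \<sigma>" "length y = \<sigma>"
  with assms(2) have "H x = H y \<longleftrightarrow> x = y"
    by (auto dest: inj_onD)
  then show "view_A H x y = sim_A x (x = y)"
    by (rule view_A_eq_sim_A)
  show "view_B H x y = sim_B y"
    by (rule view_B_eq_sim_B)
qed

end
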